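(* Let $Q\ge1$, $D\ge1$, and for $q=1,\dots,Q$ let $\alpha_q\ge0$ with $\sum_{q=1}^Q\alpha_q=1$, $\boldsymbol\mu_{q1},\boldsymbol\mu_{q2}\in\mathbb{R}^D$, $\boldsymbol\sigma_{q1}^2,\boldsymbol\sigma_{q2}^2\in\mathbb{R}^D$ with positive entries, and $\rho_q\in[-1,1]$. Let $p_{\mathrm{ngsm}}$ and $k_{\mathrm{ngsm}}$ be the NG-SM spectral density and kernel defined in the context. Let $L$ be an even positive integer and let $[\mathbf{w}_1^{(l)};\mathbf{w}_2^{(l)}]$, $l=1,\dots,L/2$, be i.i.d. random vectors in $\mathbb{R}^{2D}$ drawn from $p_{\mathrm{ngsm}}(\mathbf{w}_1,\mathbf{w}_2)$. Define the random feature map $\phi:\mathbb{R}^D\to\mathbb{R}^L$ by \[ \phi(\mathbf{x})=\sqrt{\tfrac{1}{2L}}\begin{bmatrix}\big(\cos(\mathbf{w}_1^{(l)\top}\mathbf{x})+\cos(\mathbf{w}_2^{(l)\top}\mathbf{x})\big)_{l=1}^{L/2}\\ \big(\sin(\mathbf{w}_1^{(l)\top}\mathbf{x})+\sin(\mathbf{w}_2^{(l)\top}\mathbf{x})\big)_{l=1}^{L/2}\end{bmatrix}. \] Then $\phi(\mathbf{x}_1)^\top\phi(\mathbf{x}_2)$ is an unbiased estimator of $k_{\mathrm{ngsm}}(\mathbf{x}_1,\mathbf{x}_2)$, i.e. $\mathbb{E}[\phi(\mathbf{x}_1)^\top\phi(\mathbf{x}_2)]=k_{\mathrm{ngsm}}(\mathbf{x}_1,\mathbf{x}_2)$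 for all $\mathbf{x}_1,\mathbf{x}_2\in\mathbb{R}^D$.
   Context: For each $q$, set $\boldsymbol\Sigma_1=\operatorname{diag}(\boldsymbol\sigma_{q1}^2)$, $\boldsymbol\Sigma_2=\operatorname{diag}(\boldsymbol\sigma_{q2}^2)$, $\boldsymbol\Sigma_c=\rho_q\operatorname{diag}(\boldsymbol\sigma_{q1})\operatorname{diag}(\boldsymbol\sigma_{q2})$ (index $q$ suppressed), and let $\mathcal{N}_q$ denote the Gaussian density on $\mathbb{R}^{2D}$ with mean $(\boldsymbol\mu_{q1},\boldsymbol\mu_{q2})$ and covariance $\begin{bmatrix}\boldsymbol\Sigma_1&\boldsymbol\Sigma_c^\top\\ \boldsymbol\Sigma_c&\boldsymbol\Sigma_2\end{bmatrix}$. Define $s_q(\mathbf{w}_1,\mathbf{w}_2)=\tfrac12\mathcal{N}_q(\mathbf{w}_1,\mathbf{w}_2)+\tfrac12\mathcal{N}_q(-\mathbf{w}_1,-\mathbf{w}_2)$ and $p_{\mathrm{ngsm}}(\mathbf{w}_1,\mathbf{w}_2)=\sum_{q=1}^Q\alpha_q s_q(\mathbf{w}_1,\mathbf{w}_2)$. The NG-SM kernel is \[ \begin{aligned} k_{\mathrm{ngsm}}(\mathbf{x}_1,\mathbf{x}_2)=\frac14\sum_{q=1}^Q\alpha_q\Big[&\exp\!\big(-\tfrac12(\mathbf{x}_1^\top\boldsymbol\Sigma_1\mathbf{x}_1-2\mathbf{x}_1^\top\boldsymbol\Sigma_c\mathbf{x}_2+\mathbf{x}_2^\top\boldsymbol\Sigma_2\mathbf{x}_2)\big)\cos(\boldsymbol\mu_{q1}^\top\mathbf{x}_1-\boldsymbol\mu_{q2}^\top\mathbf{x}_2)\\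 &+\exp\!\big(-\tfrac12(\mathbf{x}_2^\top\boldsymbol\Sigma_1\mathbf{x}_2-2\mathbf{x}_1^\top\boldsymbol\Sigma_c\mathbf{x}_2+\mathbf{x}_1^\top\boldsymbol\Sigma_2\mathbf{x}_1)\big)\cos(\boldsymbol\mu_{q1}^\top\mathbf{x}_2-\boldsymbol\mu_{q2}^\top\mathbf{x}_1)\\ &+\exp\!\big(-\tfrac12(\mathbf{x}_1-\mathbf{x}_2)^\top\boldsymbol\Sigma_1(\mathbf{x}_1-\mathbf{x}_2)\big)\cos(\boldsymbol\mu_{q1}^\top(\mathbf{x}_1-\mathbf{x}_2))\\ &+\exp\!\big(-\tfrac12(\mathbf{x}_1-\mathbf{x}_2)^\top\boldsymbol\Sigma_2(\mathbf{x}_1-\mathbf{x}_2)\big)\cos(\boldsymbol\mu_{q2}^\top(\mathbf{x}_1-\mathbf{x}_2))\Big]. \end{aligned} \] *)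

theory Defs
  imports "HOL-Analysis.Analysis" "HOL-Probability.Probability"
begin

definition diagm :: "real^'n \<Rightarrow> real^'n^'n" where
  "diagm v = (\<chi> i j. if i = j then v $ i else 0)"

definition stack :: "real^'d \<Rightarrow> real^'d \<Rightarrow> real^('d + 'd)" where
  "stack a b = (\<chi> k. case k of Inl i \<Rightarrow> a $ i | Inr i \<Rightarrow> b $ i)"

definition top_part :: "real^('d + 'd) \<Rightarrow> real^'d" where
  "top_part w = (\<chi> i. w $ Inl i)"

definition bot_part :: "real^('d + 'd) \<Rightarrow> real^'d" where
  "bot_part w = (\<chi> i. w $ Inr i)"

definition block :: "real^'d^'d \<Rightarrow> real^'d^'d \<Rightarrow> real^'d^'d \<Rightarrow> real^'d^'d \<Rightarrow> real^('d+'d)^('d+'d)" where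
  "block A B C E = (\<chi> r c. case (r, c) of
       (Inl i, Inl j) \<Rightarrow> A $ i $ j | (Inl i, Inr j) \<Rightarrow> B $ i $ j
     | (Inr i, Inl j) \<Rightarrow> C $ i $ j | (Inr i, Inr j) \<Rightarrow> E $ i $ j)"

definition gauss_density :: "real^'n \<Rightarrow> real^'n^'n \<Rightarrow> real^'n \<Rightarrow> real" where
  "gauss_density m C w =
     exp (- (1/2) * ((w - m) \<bullet> (matrix_inv C *v (w - m)))) / sqrt ((2 * pi) ^ CARD('n) * det C)"

text \<open>Parameters: sd1 q = \<sigma>_{q1}^2 (vector of variances), sd2 q = \<sigma>_{q2}^2.\<close>
definition Sig1 :: "(nat \<Rightarrow> real^'d) \<Rightarrow> nat \<Rightarrow> real^'d^'d" where
  "Sig1 s1 q = diagm (s1 q)"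

definition Sig2 :: "(nat \<Rightarrow> real^'d) \<Rightarrow> nat \<Rightarrow> real^'d^'d" where
  "Sig2 s2 q = diagm (s2 q)"

definition Sigc :: "(nat \<Rightarrow> real) \<Rightarrow> (nat \<Rightarrow> real^'d) \<Rightarrow> (nat \<Rightarrow> real^'d) \<Rightarrow> nat \<Rightarrow> real^'d^'d" where
  "Sigc rho s1 s2 q = rho q *\<^sub>R (diagm (\<chi> i. sqrt (s1 q $ i)) ** diagm (\<chi> i. sqrt (s2 q $ i)))"

definition Nq :: "(nat \<Rightarrow> real^'d) \<Rightarrow> (nat \<Rightarrow> real^'d) \<Rightarrow> (nat \<Rightarrow> real^'d) \<Rightarrow> (nat \<Rightarrow> real^'d)
     \<Rightarrow> (nat \<Rightarrow> real) \<Rightarrow> nat \<Rightarrow> real^'d \<Rightarrow> real^'d \<Rightarrow> real" where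
  "Nq mu1 mu2 s1 s2 rho q w1 w2 =
     gauss_density (stack (mu1 q) (mu2 q))
       (block (Sig1 s1 q) (transpose (Sigc rho s1 s2 q)) (Sigc rho s1 s2 q) (Sig2 s2 q))
       (stack w1 w2)"

definition sq :: "(nat \<Rightarrow> real^'d) \<Rightarrow> (nat \<Rightarrow> real^'d) \<Rightarrow> (nat \<Rightarrow> real^'d) \<Rightarrow> (nat \<Rightarrow> real^'d)
     \<Rightarrow> (nat \<Rightarrow> real) \<Rightarrow> nat \<Rightarrow> real^'d \<Rightarrow> real^'d \<Rightarrow> real" where
  "sq mu1 mu2 s1 s2 rho q w1 w2 =
     (1/2) * Nq mu1 mu2 s1 s2 rho q w1 w2 + (1/2) * Nq mu1 mu2 s1 s2 rho q (- w1) (- w2)"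

definition p_ngsm :: "nat \<Rightarrow> (nat \<Rightarrow> real) \<Rightarrow> (nat \<Rightarrow> real^'d) \<Rightarrow> (nat \<Rightarrow> real^'d) \<Rightarrow> (nat \<Rightarrow> real^'d)
     \<Rightarrow> (nat \<Rightarrow> real^'d) \<Rightarrow> (nat \<Rightarrow> real) \<Rightarrow> real^'d \<Rightarrow> real^'d \<Rightarrow> real" where
  "p_ngsm Q alpha mu1 mu2 s1 s2 rho w1 w2 =
     (\<Sum>q = 1..Q. alpha q * sq mu1 mu2 s1 s2 rho q w1 w2)"

definition k_ngsm :: "nat \<Rightarrow> (nat \<Rightarrow> real) \<Rightarrow> (nat \<Rightarrow> real^'d) \<Rightarrow> (nat \<Rightarrow> real^'d) \<Rightarrow> (nat \<Rightarrow> real^'d)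
     \<Rightarrow> (nat \<Rightarrow> real^'d) \<Rightarrow> (nat \<Rightarrow> real) \<Rightarrow> real^'d \<Rightarrow> real^'d \<Rightarrow> real" where
  "k_ngsm Q alpha mu1 mu2 s1 s2 rho x1 x2 =
     (1/4) * (\<Sum>q = 1..Q. alpha q *
       (let S1 = Sig1 s1 q; S2 = Sig2 s2 q; Sc = Sigc rho s1 s2 q in
          exp (- (1/2) * (x1 \<bullet> (S1 *v x1) - 2 * (x1 \<bullet> (Sc *v x2)) + x2 \<bullet> (S2 *v x2)))
            * cos (mu1 q \<bullet> x1 - mu2 q \<bullet> x2)
        + exp (- (1/2) * (x2 \<bullet> (S1 *v x2) - 2 * (x1 \<bullet> (Sc *v x2)) + x1 \<bullet> (S2 *v x1)))
            * cos (mu1 q \<bullet> x2 - mu2 q \<bullet> x1)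
        + exp (- (1/2) * ((x1 - x2) \<bullet> (S1 *v (x1 - x2)))) * cos (mu1 q \<bullet> (x1 - x2))
        + exp (- (1/2) * ((x1 - x2) \<bullet> (S2 *v (x1 - x2)))) * cos (mu2 q \<bullet> (x1 - x2))))"

text \<open>Random feature map phi(x) in R^L, as a function on indices k = 0..L-1
  (k < L/2: cosine block with l = k+1; k >= L/2: sine block with l = k - L/2 + 1).
  W l = [w1^(l); w2^(l)] for l = 1..L/2.\<close>
definition phi :: "nat \<Rightarrow> (nat \<Rightarrow> real^('d+'d)) \<Rightarrow> real^'d \<Rightarrow> nat \<Rightarrow> real" where
  "phi L W x k = sqrt (1 / (2 * real L)) *
     (if k < L div 2 then
        cos (top_part (W (k + 1)) \<bullet> x) + cos (bot_part (W (k + 1)) \<bullet> x)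
      else
        sin (top_part (W (k - L div 2 + 1)) \<bullet> x) + sin (bot_part (W (k - L div 2 + 1)) \<bullet> x))"

end

theory Submission
  imports Defs
begin

(* Grouping coordinate i of w1 with coordinate i of w2, every covariance matrix of the NG-SM mixture
   becomes block diagonal with 2x2 blocks [[s1_i, c_i], [c_i, s2_i]], c_i = rho sqrt (s1_i s2_i).
   Hence each Gaussian density factors into D bivariate normal densities, and Fubini gives its
   characteristic function exp (i t.m - t.C t / 2).  Since cos a cos b + sin a sin b = cos (a - b),
   one frequency pair contributes four cosines cos (T.w) to phi(x1).phi(x2), with T among
   (x1,-x2), (-x2,x1), (x1-x2,0), (0,x1-x2); integrated against the symmetrised density they give
   exactly the four terms of k_ngsm.  A component with |rho_q| = 1 has a singular covariance and
   hence, by the junk value of the division, density 0; as p_ngsm is a probability density, the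
   weights of such components must vanish. *)

section \<open>Stacked vectors and block matrices\<close>

lemma sum_UNIV_Plus:
  "(\<Sum>k\<in>UNIV. f k) = (\<Sum>i\<in>UNIV. f (Inl i)) + (\<Sum>i\<in>UNIV. f (Inr i))"
  for f :: "'a::finite + 'b::finite \<Rightarrow> 'c::comm_monoid_add"
  using sum.Plus[of "UNIV::'a set" "UNIV::'b set" f] by (simp add: comp_def)

lemma prod_UNIV_Plus:
  "(\<Prod>k\<in>UNIV. f k) = (\<Prod>i\<in>UNIV. f (Inl i)) * (\<Prod>i\<in>UNIV. f (Inr i))"
  for f :: "'a::finite + 'b::finite \<Rightarrow> 'c::comm_monoid_mult"
  using prod.Plus[of "UNIV::'a set" "UNIV::'b set" f] by (simp add: comp_def)

lemma stack_nth [simp]: "stack a b $ Inl i = a $ i" "stack a b $ Inr i = b $ i"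
  by (simp_all add: stack_def)

lemma top_part_nth [simp]: "top_part w $ i = w $ Inl i"
  and bot_part_nth [simp]: "bot_part w $ i = w $ Inr i"
  by (simp_all add: top_part_def bot_part_def)

lemma stack_eq_iff: "w = stack a b \<longleftrightarrow> (\<forall>i. w $ Inl i = a $ i \<and> w $ Inr i = b $ i)"
  by (auto simp: vec_eq_iff stack_def split: sum.split)

lemma stack_top_bot_part [simp]: "stack (top_part w) (bot_part w) = w"
  by (simp add: vec_eq_iff stack_def split: sum.split)

lemma uminus_stack: "- stack a b = stack (- a) (- b)"
  by (simp add: stack_eq_iff)

lemma inner_stack: "stack a b \<bullet> stack c d = a \<bullet> c + b \<bullet> d"
  by (simp add: inner_vec_def sum_UNIV_Plus)

lemma inner_vec_Plus:
  "t \<bullet> w = (\<Sum>i\<in>UNIV. t $ Inl i * w $ Inl i + t $ Inr i * w $ Inr i)"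
  for t w :: "real^('d::finite + 'd)"
  by (simp add: inner_vec_def sum_UNIV_Plus sum.distrib)

lemma block_nth [simp]:
  "block A B C E $ Inl i $ Inl j = A $ i $ j"
  "block A B C E $ Inl i $ Inr j = B $ i $ j"
  "block A B C E $ Inr i $ Inl j = C $ i $ j"
  "block A B C E $ Inr i $ Inr j = E $ i $ j"
  by (simp_all add: block_def)

lemma block_eq_iff:
  "M = block A B C E \<longleftrightarrow>
     (\<forall>i j. M $ Inl i $ Inl j = A $ i $ j \<and> M $ Inl i $ Inr j = B $ i $ j
          \<and> M $ Inr i $ Inl j = C $ i $ j \<and> M $ Inr i $ Inr j = E $ i $ j)"
  apply (auto simp: vec_eq_iff)
  subgoal for i j by (cases i; cases j) auto
  done

lemma block_inject:
  "block A B C E = block A' B' C' E' \<longleftrightarrow> A = A' \<and> B = B' \<and> C = C' \<and> E = E'"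
  unfolding block_eq_iff block_nth by (auto simp: vec_eq_iff)

lemma block_mult:
  "block A B C E ** block A' B' C' E' =
     block (A ** A' + B ** C') (A ** B' + B ** E') (C ** A' + E ** C') (C ** B' + E ** E')"
  by (simp add: block_eq_iff matrix_matrix_mult_def sum_UNIV_Plus)

lemma block_mulv:
  "block A B C E *v stack x y = stack (A *v x + B *v y) (C *v x + E *v y)"
  by (simp add: stack_eq_iff matrix_vector_mult_def sum_UNIV_Plus)

lemma transpose_block:
  "transpose (block A B C E) = block (transpose A) (transpose C) (transpose B) (transpose E)"
  by (simp add: block_eq_iff transpose_def)

lemma mat_1_block: "(mat 1 :: real^('d::finite+'d)^('d+'d)) = block (mat 1) 0 0 (mat 1)"
  by (simp add: block_eq_iff mat_def)

section \<open>Diagonal matrices and pairwise covariance matrices\<close>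

lemma diagm_nth [simp]: "diagm v $ i $ j = (if i = j then v $ i else 0)"
  by (simp add: diagm_def)

lemma diagm_inject: "diagm u = diagm v \<longleftrightarrow> u = v"
  by (auto simp: vec_eq_iff)

lemma diagm_mult: "diagm u ** diagm v = diagm (u * v)"
proof -
  have "(\<Sum>k\<in>UNIV. (if i = k then u $ i else 0) * (if k = j then v $ k else 0)) =
      (\<Sum>k\<in>UNIV. if k = i then (if i = j then u $ i * v $ i else 0) else 0)" for i j
    by (rule sum.cong) auto
  then show ?thesis by (simp add: vec_eq_iff matrix_matrix_mult_def)
qed

lemma diagm_add: "diagm u + diagm v = diagm (u + v)"
  by (simp add: vec_eq_iff)

lemma diagm_mulv: "diagm u *v x = u * x"
proof -
  have "(\<Sum>j\<in>UNIV. (if i = j then u $ i else 0) * x $ j) = (\<Sum>j\<in>UNIV. if j = i then u $ i * x $ i else 0)" for i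
    by (rule sum.cong) auto
  then show ?thesis by (simp add: vec_eq_iff matrix_vector_mult_def)
qed

lemma transpose_diagm: "transpose (diagm u) = diagm u"
  by (simp add: vec_eq_iff transpose_def)

lemma mat_1_diagm: "(mat 1 :: real^'n^'n) = diagm 1"
  by (simp add: vec_eq_iff mat_def)

lemma zero_diagm: "(0 :: real^'n^'n) = diagm 0"
  by (simp add: vec_eq_iff)

lemma scaleR_diagm: "r *\<^sub>R diagm u = diagm (r *\<^sub>R u)"
  by (simp add: vec_eq_iff)

lemma inner_diagm_mulv: "x \<bullet> (diagm a *v y) = (\<Sum>i\<in>UNIV. a $ i * x $ i * y $ i)"
  by (simp add: diagm_mulv inner_vec_def algebra_simps)

lemma det_block_lower_diagm:
  fixes u g h :: "real^'d::finite"
  shows "det (block (diagm u) 0 (diagm g) (diagm h)) = (\<Prod>i\<in>UNIV. u $ i * h $ i)"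
proof -
  let ?L = "block (diagm u) 0 (diagm g) (diagm h)"
  have off_id: "(\<Prod>k\<in>UNIV. ?L $ k $ \<pi> k) = 0" if \<pi>: "\<pi> permutes UNIV" "\<pi> \<noteq> id" for \<pi>
  proof (rule ccontr)
    assume "(\<Prod>k\<in>UNIV. ?L $ k $ \<pi> k) \<noteq> 0"
    then have nz: "?L $ k $ \<pi> k \<noteq> 0" for k by auto
    have l: "\<pi> (Inl i) = Inl i" for i
      using nz[of "Inl i"] by (cases "\<pi> (Inl i)") (auto split: if_splits)
    have r: "\<pi> (Inr i) = Inr i" for i
    proof (cases "\<pi> (Inr i)")
      case (Inl j)
      with nz[of "Inr i"] l[of i] have "\<pi> (Inr i) = \<pi> (Inl i)" by (auto split: if_splits)
      then show ?thesis using permutes_inj[OF \<pi>(1)] by (auto dest: injD)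
    next
      case (Inr j)
      with nz[of "Inr i"] show ?thesis by (auto split: if_splits)
    qed
    have "\<pi> = id"
      by (rule ext) (metis id_apply l r sum.exhaust)
    with \<pi>(2) show False ..
  qed
  have "det ?L = (\<Sum>\<pi>\<in>{\<pi>. \<pi> permutes (UNIV :: ('d + 'd) set)}. if \<pi> = id then (\<Prod>k\<in>UNIV. ?L $ k $ k) else 0)"
    unfolding det_def by (rule sum.cong[OF refl]) (auto simp: off_id sign_id)
  also have "\<dots> = (\<Prod>i\<in>UNIV. u $ i * h $ i)"
    by (simp add: permutes_id prod_UNIV_Plus prod.distrib)
  finally show ?thesis .
qed

(* Under this covariance the pairs (w $ Inl i, w $ Inr i) are independent, with variances a_i, b_i
   and covariance c_i. *)
definition pairwise_cov :: "real^'d \<Rightarrow> real^'d \<Rightarrow> real^'d \<Rightarrow> real^('d + 'd)^('d + 'd)" where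
  "pairwise_cov a b c = block (diagm a) (diagm c) (diagm c) (diagm b)"

lemma pairwise_cov_cholesky:
  fixes a b c :: "real^'d::finite"
  assumes a: "\<And>i. a $ i > 0" and disc: "\<And>i. (c $ i)^2 \<le> a $ i * b $ i"
  defines "A \<equiv> block (diagm (\<chi> i. sqrt (a $ i))) 0 (diagm (\<chi> i. c $ i / sqrt (a $ i)))
                  (diagm (\<chi> i. sqrt (b $ i - (c $ i)^2 / a $ i)))"
  shows "pairwise_cov a b c = A ** transpose A"
proof -
  have "b $ i - (c $ i)^2 / a $ i \<ge> 0" for i
    using a[of i] disc[of i] by (simp add: field_simps)
  then have abs_cond: "\<bar>b $ i - (c $ i)^2 / a $ i\<bar> = b $ i - (c $ i)^2 / a $ i" for i
    by simp
  have abs_a: "\<bar>a $ i\<bar> = a $ i" and a_nz: "a $ i \<noteq> 0" for i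
    using a[of i] by auto
  have b_eq: "c $ i * c $ i / a $ i + (b $ i - (c $ i)^2 / a $ i) = b $ i" for i
    by (simp add: power2_eq_square)
  show ?thesis
    unfolding A_def pairwise_cov_def transpose_block transpose_diagm block_mult zero_diagm
      diagm_mult diagm_add block_inject diagm_inject
    by (simp add: vec_eq_iff abs_cond abs_a a_nz b_eq)
qed

lemma det_pairwise_cov:
  fixes a b c :: "real^'d::finite"
  assumes a: "\<And>i. a $ i > 0" and disc: "\<And>i. (c $ i)^2 \<le> a $ i * b $ i"
  shows "det (pairwise_cov a b c) = (\<Prod>i\<in>UNIV. a $ i * b $ i - (c $ i)^2)"
proof -
  have sqrt_sq: "sqrt x * sqrt y * (sqrt x * sqrt y) = x * y" if "x \<ge> 0" "y \<ge> 0" for x y :: real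
    using that by (simp add: real_sqrt_mult[symmetric])
  have nonneg: "b $ i - (c $ i)^2 / a $ i \<ge> 0" for i
    using a[of i] disc[of i] by (simp add: field_simps)
  have entry: "sqrt (a $ i) * sqrt (b $ i - (c $ i)^2 / a $ i) * (sqrt (a $ i) * sqrt (b $ i - (c $ i)^2 / a $ i))
      = a $ i * b $ i - (c $ i)^2" for i
    unfolding sqrt_sq[OF less_imp_le[OF a[of i]] nonneg[of i]] using a[of i] by (simp add: field_simps)
  show ?thesis
    by (simp only: pairwise_cov_cholesky[OF a disc] det_mul det_transpose det_block_lower_diagm
        vec_lambda_beta prod.distrib[symmetric] entry)
qed

lemma matrix_inv_eqI:
  fixes A B :: "real^'n^'n"
  assumes AB: "A ** B = mat 1" and BA: "B ** A = mat 1"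
  shows "matrix_inv A = B"
proof -
  have inv: "matrix_inv A ** A = mat 1"
    unfolding matrix_inv_def by (rule someI2[of _ B]) (use AB BA in auto)
  have "matrix_inv A = matrix_inv A ** (A ** B)" by (simp add: AB)
  also have "\<dots> = B" by (simp add: matrix_mul_assoc inv)
  finally show ?thesis .
qed

lemma matrix_inv_pairwise_cov:
  fixes a b c :: "real^'d::finite"
  assumes disc: "\<And>i. (c $ i)^2 < a $ i * b $ i"
  defines "\<Delta> \<equiv> \<chi> i. a $ i * b $ i - (c $ i)^2"
  shows "matrix_inv (pairwise_cov a b c) =
    pairwise_cov (\<chi> i. b $ i / \<Delta> $ i) (\<chi> i. a $ i / \<Delta> $ i) (\<chi> i. - c $ i / \<Delta> $ i)"
proof (rule matrix_inv_eqI)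
  let ?B = "pairwise_cov (\<chi> i. b $ i / \<Delta> $ i) (\<chi> i. a $ i / \<Delta> $ i) (\<chi> i. - c $ i / \<Delta> $ i)"
  have "\<Delta> $ i \<noteq> 0" for i
    using disc[of i] by (simp add: \<Delta>_def)
  then show "pairwise_cov a b c ** ?B = mat 1" and "?B ** pairwise_cov a b c = mat 1"
    unfolding pairwise_cov_def block_mult diagm_mult diagm_add mat_1_block mat_1_diagm zero_diagm
      block_inject diagm_inject
    by (auto simp: vec_eq_iff field_simps) (auto simp: \<Delta>_def power2_eq_square)
qed

lemma quadratic_form_pairwise_cov:
  "w \<bullet> (pairwise_cov a b c *v w) =
     (\<Sum>i\<in>UNIV. a $ i * (w $ Inl i)^2 + 2 * c $ i * w $ Inl i * w $ Inr i + b $ i * (w $ Inr i)^2)"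
proof -
  have "pairwise_cov a b c *v w = stack (a * top_part w + c * bot_part w) (c * top_part w + b * bot_part w)"
    by (metis block_mulv diagm_mulv pairwise_cov_def stack_top_bot_part)
  then show ?thesis
    unfolding inner_vec_Plus by (intro sum.cong) (simp_all add: algebra_simps power2_eq_square)
qed

lemma quadratic_form_pairwise_cov_stack:
  "stack u v \<bullet> (pairwise_cov a b c *v stack u v) =
     u \<bullet> (diagm a *v u) + 2 * (u \<bullet> (diagm c *v v)) + v \<bullet> (diagm b *v v)"
  unfolding quadratic_form_pairwise_cov inner_diagm_mulv
  by (simp add: sum.distrib sum_distrib_left power2_eq_square algebra_simps)

section \<open>Lebesgue measure on pairs of coordinates\<close>

definition pair_vec :: "('d \<Rightarrow> real \<times> real) \<Rightarrow> real^('d::finite + 'd)" where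
  "pair_vec f = stack (\<chi> i. fst (f i)) (\<chi> i. snd (f i))"

lemma pair_vec_nth [simp]: "pair_vec f $ Inl i = fst (f i)" "pair_vec f $ Inr i = snd (f i)"
  by (simp_all add: pair_vec_def)

lemma measurable_pair_vec [measurable]: "pair_vec \<in> (\<Pi>\<^sub>M i\<in>UNIV. lborel) \<rightarrow>\<^sub>M borel"
proof -
  have fst: "fst \<in> borel_measurable (borel :: (real \<times> real) measure)"
    and snd: "snd \<in> borel_measurable (borel :: (real \<times> real) measure)"
    by (intro borel_measurable_continuous_onI continuous_intros)+
  have component: "(\<lambda>f. f i) \<in> (\<Pi>\<^sub>M i\<in>UNIV. lborel) \<rightarrow>\<^sub>M (borel :: (real \<times> real) measure)" for i :: 'd
    using measurable_component_singleton[of i UNIV "\<lambda>_. lborel :: (real \<times> real) measure"] by simp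
  have "(\<lambda>f. pair_vec f $ k) \<in> borel_measurable (\<Pi>\<^sub>M i\<in>UNIV. (lborel :: (real \<times> real) measure))" for k
    by (cases k) (simp_all add: measurable_compose[OF component fst] measurable_compose[OF component snd])
  then show ?thesis
    by (subst borel_measurable_euclidean_space) (auto simp: Basis_vec_def inner_axis)
qed

lemma prod_Basis_vec: "(\<Prod>b\<in>(Basis :: (real^'n) set). f b) = (\<Prod>k\<in>UNIV. f (axis k 1))"
proof -
  have Basis_eq: "(Basis :: (real^'n) set) = range (\<lambda>k. axis k 1)"
    by (auto simp: Basis_vec_def)
  have "inj (\<lambda>k::'n. axis k (1::real))"
    by (auto intro: injI simp: axis_eq_axis)
  then show ?thesis
    unfolding Basis_eq by (simp add: prod.reindex)
qed

lemma lborel_eq_distr_pair_vec: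
  "(lborel :: (real^('d::finite + 'd)) measure) = distr (\<Pi>\<^sub>M i\<in>UNIV. lborel) borel pair_vec"
proof (rule lborel_eqI)
  interpret product_sigma_finite "\<lambda>_::'d. lborel :: (real \<times> real) measure"
    by (simp add: product_sigma_finite_def lborel.sigma_finite_measure_axioms)
  fix l u :: "real^('d + 'd)"
  assume box_le: "\<And>b. b \<in> Basis \<Longrightarrow> l \<bullet> b \<le> u \<bullet> b"
  have le: "l $ k \<le> u $ k" for k
    using box_le[of "axis k 1"] by (simp add: inner_axis)
  let ?I = "\<lambda>i. {l $ Inl i <..< u $ Inl i} \<times> {l $ Inr i <..< u $ Inr i}"
  have "pair_vec f \<in> box l u \<longleftrightarrow> (\<forall>i. f i \<in> ?I i)" for f
  proof -
    have "pair_vec f \<in> box l u \<longleftrightarrow> (\<forall>k. l $ k < pair_vec f $ k \<and> pair_vec f $ k < u $ k)"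
      by (simp add: mem_box_cart)
    also have "\<dots> \<longleftrightarrow> (\<forall>i. f i \<in> ?I i)"
      by (auto simp: mem_Times_iff) (metis sum.exhaust pair_vec_nth)+
    finally show ?thesis .
  qed
  then have preimage: "pair_vec -` box l u \<inter> space (\<Pi>\<^sub>M i\<in>UNIV. lborel) = (\<Pi>\<^sub>E i\<in>UNIV. ?I i)"
    by (auto simp: space_PiM PiE_def extensional_def)
  have "emeasure (distr (\<Pi>\<^sub>M i\<in>UNIV. lborel) borel pair_vec) (box l u) = (\<Prod>i\<in>UNIV. emeasure lborel (?I i))"
    by (simp add: emeasure_distr preimage emeasure_PiM borel_open open_Times)
  also have "\<dots> = (\<Prod>i\<in>UNIV. emeasure (lborel \<Otimes>\<^sub>M lborel) (?I i))"
    by (simp add: lborel_prod)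
  also have "\<dots> = (\<Prod>i\<in>UNIV. ennreal ((u $ Inl i - l $ Inl i) * (u $ Inr i - l $ Inr i)))"
    using le by (simp add: lborel.emeasure_pair_measure_Times ennreal_mult)
  also have "\<dots> = (\<Prod>b\<in>Basis. (u - l) \<bullet> b)"
    using le by (simp add: prod_Basis_vec inner_axis prod_UNIV_Plus prod.distrib prod_ennreal)
  finally show "emeasure (distr (\<Pi>\<^sub>M i\<in>UNIV. lborel) borel pair_vec) (box l u) = (\<Prod>b\<in>Basis. (u - l) \<bullet> b)" .
qed simp

lemma
  fixes H :: "'d::finite \<Rightarrow> real \<times> real \<Rightarrow> complex"
  assumes H: "\<And>i. integrable lborel (H i)"
  shows integrable_prod_pairs: "integrable lborel (\<lambda>w::real^('d + 'd). \<Prod>i\<in>UNIV. H i (w $ Inl i, w $ Inr i))"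
    and integral_prod_pairs: "(\<integral>w. (\<Prod>i\<in>UNIV. H i (w $ Inl i, w $ Inr i)) \<partial>lborel) = (\<Prod>i\<in>UNIV. \<integral>z. H i z \<partial>lborel)"
proof -
  interpret product_sigma_finite "\<lambda>_::'d. lborel :: (real \<times> real) measure"
    by (simp add: product_sigma_finite_def lborel.sigma_finite_measure_axioms)
  have "(\<lambda>w::real^('d + 'd). (w $ Inl i, w $ Inr i)) \<in> borel_measurable borel" for i
    by (intro borel_measurable_continuous_onI continuous_intros)
  with H have meas: "(\<lambda>w::real^('d + 'd). \<Prod>i\<in>UNIV. H i (w $ Inl i, w $ Inr i)) \<in> borel_measurable borel"
    by (auto intro!: borel_measurable_prod measurable_compose[where f = "\<lambda>w. (w $ Inl _, w $ Inr _)"]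
        dest: borel_measurable_integrable)
  have "integrable (\<Pi>\<^sub>M i\<in>UNIV. lborel) (\<lambda>f. \<Prod>i\<in>UNIV. H i (f i))"
    by (rule product_integrable_prod) (auto intro: H)
  with meas show "integrable lborel (\<lambda>w::real^('d + 'd). \<Prod>i\<in>UNIV. H i (w $ Inl i, w $ Inr i))"
    by (subst lborel_eq_distr_pair_vec) (simp add: integrable_distr_eq)
  show "(\<integral>w. (\<Prod>i\<in>UNIV. H i (w $ Inl i, w $ Inr i)) \<partial>lborel) = (\<Prod>i\<in>UNIV. \<integral>z. H i z \<partial>lborel)"
    using meas by (subst lborel_eq_distr_pair_vec) (simp add: integral_distr product_integral_prod H)
qed

section \<open>Characteristic functions of Gaussian densities\<close>

lemma iexp_add: "iexp (u + v) = iexp u * iexp v"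
  by (simp add: distrib_left exp_add)

lemma iexp_sum: "finite A \<Longrightarrow> iexp (\<Sum>i\<in>A. f i) = (\<Prod>i\<in>A. iexp (f i))"
  by (simp add: sum_distrib_left exp_sum)

lemma integral_std_normal_density_iexp:
  "(\<integral>x. complex_of_real (std_normal_density x) * iexp (t * x) \<partial>lborel) = complex_of_real (exp (- (t^2) / 2))"
proof -
  have "char std_normal_distribution t = (\<integral>x. std_normal_density x *\<^sub>R iexp (t * x) \<partial>lborel)"
    unfolding char_def by (subst integral_density) (auto simp: normal_density_nonneg)
  then show ?thesis
    by (simp add: char_std_normal_distribution scaleR_conv_of_real)
qed

lemma integrable_normal_density_iexp:
  assumes "\<sigma> > 0"
  shows "integrable lborel (\<lambda>y. complex_of_real (normal_density \<mu> \<sigma> y) * iexp (r * y))"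
proof (rule Bochner_Integration.integrable_bound[OF integrable_normal_density[OF assms, of \<mu>]])
  show "(\<lambda>y. complex_of_real (normal_density \<mu> \<sigma> y) * iexp (r * y)) \<in> borel_measurable lborel"
    unfolding measurable_lborel2 normal_density_def
    using assms by (intro borel_measurable_continuous_onI continuous_intros) auto
qed (simp add: norm_mult)

lemma integral_normal_density_iexp:
  assumes \<sigma>: "\<sigma> > 0"
  shows "(\<integral>y. complex_of_real (normal_density \<mu> \<sigma> y) * iexp (r * y) \<partial>lborel) =
     iexp (r * \<mu>) * complex_of_real (exp (- (r^2 * \<sigma>^2) / 2))"
proof -
  have affine: "normal_density \<mu> \<sigma> (\<mu> + \<sigma> * z) * iexp (r * (\<mu> + \<sigma> * z)) =
      (iexp (r * \<mu>) / \<sigma>) * (std_normal_density z * iexp ((r * \<sigma>) * z))" for z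
    using \<sigma> by (simp add: normal_density_def real_sqrt_mult power_mult_distrib field_simps
        exp_add[symmetric] algebra_simps)
  have "(\<integral>y. complex_of_real (normal_density \<mu> \<sigma> y) * iexp (r * y) \<partial>lborel) =
      \<bar>\<sigma>\<bar> *\<^sub>R (\<integral>z. normal_density \<mu> \<sigma> (\<mu> + \<sigma> * z) * iexp (r * (\<mu> + \<sigma> * z)) \<partial>lborel)"
    using \<sigma> by (intro lborel_integral_real_affine) simp
  also have "\<dots> = \<sigma> *\<^sub>R ((iexp (r * \<mu>) / \<sigma>) * (\<integral>z. std_normal_density z * iexp ((r * \<sigma>) * z) \<partial>lborel))"
    using \<sigma> by (simp only: affine abs_of_pos integral_mult_right_zero)
  also have "\<dots> = iexp (r * \<mu>) * complex_of_real (exp (- (r^2 * \<sigma>^2) / 2))"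
    using \<sigma> by (simp only: integral_std_normal_density_iexp) (simp add: scaleR_conv_of_real power_mult_distrib)
  finally show ?thesis .
qed

definition binormal_density :: "real \<Rightarrow> real \<Rightarrow> real \<Rightarrow> real \<Rightarrow> real \<Rightarrow> real \<times> real \<Rightarrow> real" where
  "binormal_density m1 m2 a b c z =
     exp (- (b * (fst z - m1)^2 - 2 * c * (fst z - m1) * (snd z - m2) + a * (snd z - m2)^2)
            / (2 * (a * b - c^2)))
     / (2 * pi * sqrt (a * b - c^2))"

lemma binormal_density_conditional:
  assumes a: "a > 0" and disc: "c^2 < a * b"
  shows "binormal_density m1 m2 a b c (x, y) =
    normal_density m1 (sqrt a) x * normal_density (m2 + c * (x - m1) / a) (sqrt ((a * b - c^2) / a)) y"
proof -
  define D where "D = a * b - c^2"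
  have D: "D > 0" using disc by (simp add: D_def)
  have "sqrt (2 * pi * a) * sqrt (2 * pi * (D / a)) = sqrt ((2 * pi)^2 * D)"
    using a by (simp add: real_sqrt_mult[symmetric] power2_eq_square field_simps)
  then have norm_const: "sqrt (2 * pi * a) * sqrt (2 * pi * (D / a)) = 2 * pi * sqrt D"
    by (simp add: real_sqrt_mult)
  have b: "b = (D + c^2) / a"
    using a by (simp add: D_def field_simps)
  have "(b * (x - m1)^2 - 2 * c * (x - m1) * (y - m2) + a * (y - m2)^2) / (2 * D)
      = (x - m1)^2 / (2 * a) + (y - (m2 + c * (x - m1) / a))^2 / (2 * (D / a))"
    unfolding b using a D by (simp add: field_simps power2_eq_square)
  then show ?thesis
    using a D norm_const[symmetric]
    by (simp add: binormal_density_def normal_density_def D_def[symmetric] exp_add[symmetric]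
        exp_diff field_simps)
qed

lemma binormal_density_iexp_conditional:
  assumes a: "a > 0" and disc: "c^2 < a * b"
  shows "complex_of_real (binormal_density m1 m2 a b c (x, y)) * iexp (s * x + r * y) =
    (complex_of_real (normal_density m1 (sqrt a) x) * iexp (s * x)) *
    (complex_of_real (normal_density (m2 + c * (x - m1) / a) (sqrt ((a * b - c^2) / a)) y) * iexp (r * y))"
  by (simp add: binormal_density_conditional[OF a disc] exp_add[symmetric] algebra_simps)

lemma integrable_binormal_density_iexp:
  assumes a: "a > 0" and disc: "c^2 < a * b"
  shows "integrable lborel (\<lambda>z. complex_of_real (binormal_density m1 m2 a b c z) * iexp (s * fst z + r * snd z))"
proof -
  let ?F = "\<lambda>z. complex_of_real (binormal_density m1 m2 a b c z) * iexp (s * fst z + r * snd z)"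
  have \<tau>: "sqrt ((a * b - c^2) / a) > 0" and sqrt_a: "sqrt a > 0"
    using a disc by simp_all
  have "?F \<in> borel_measurable (lborel \<Otimes>\<^sub>M lborel)"
    unfolding lborel_prod measurable_lborel2 binormal_density_def
    by (intro borel_measurable_continuous_onI continuous_intros) (use disc in auto)
  moreover have "(\<integral>y. norm (?F (x, y)) \<partial>lborel) = normal_density m1 (sqrt a) x" for x
    using \<tau> unfolding fst_conv snd_conv binormal_density_iexp_conditional[OF a disc]
    by (simp add: norm_mult normal_density_nonneg integral_normal_density)
  then have "integrable lborel (\<lambda>x. \<integral>y. norm (?F (x, y)) \<partial>lborel)"
    using integrable_normal_density[OF sqrt_a] by simp
  moreover have "AE x in lborel. integrable lborel (\<lambda>y. ?F (x, y))"
    unfolding fst_conv snd_conv binormal_density_iexp_conditional[OF a disc]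
    by (intro AE_I2 integrable_mult_right integrable_normal_density_iexp[OF \<tau>])
  ultimately have "integrable (lborel \<Otimes>\<^sub>M lborel) ?F"
    by (rule lborel_pair.Fubini_integrable)
  then show ?thesis
    by (simp add: lborel_prod)
qed

lemma integral_binormal_density_iexp:
  assumes a: "a > 0" and disc: "c^2 < a * b"
  shows "(\<integral>z. complex_of_real (binormal_density m1 m2 a b c z) * iexp (s * fst z + r * snd z) \<partial>lborel) =
    iexp (s * m1 + r * m2) * complex_of_real (exp (- (a * s^2 + 2 * c * s * r + b * r^2) / 2))"
proof -
  let ?F = "\<lambda>z. complex_of_real (binormal_density m1 m2 a b c z) * iexp (s * fst z + r * snd z)"
  define \<tau> where "\<tau> = sqrt ((a * b - c^2) / a)"
  have \<tau>: "\<tau> > 0" and \<tau>_sq: "\<tau>^2 = (a * b - c^2) / a" and sqrt_a: "sqrt a > 0"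
    using a disc by (simp_all add: \<tau>_def)
  have inner: "(\<integral>y. ?F (x, y) \<partial>lborel) = (iexp (r * (m2 - c * m1 / a)) * complex_of_real (exp (- (r^2 * \<tau>^2) / 2))) *
      (complex_of_real (normal_density m1 (sqrt a) x) * iexp ((s + r * c / a) * x))" for x
  proof -
    have "s * x + r * (m2 + c * (x - m1) / a) = r * (m2 - c * m1 / a) + (s + r * c / a) * x"
      using a by (simp add: field_simps)
    then have iexp_eq: "iexp (s * x) * iexp (r * (m2 + c * (x - m1) / a)) =
        iexp (r * (m2 - c * m1 / a)) * iexp ((s + r * c / a) * x)"
      by (simp only: iexp_add[symmetric])
    let ?N = "complex_of_real (normal_density m1 (sqrt a) x)"
      and ?E = "complex_of_real (exp (- (r^2 * \<tau>^2) / 2))"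
    have "(\<integral>y. ?F (x, y) \<partial>lborel) = ?N * iexp (s * x) * (iexp (r * (m2 + c * (x - m1) / a)) * ?E)"
      unfolding fst_conv snd_conv binormal_density_iexp_conditional[OF a disc] \<tau>_def[symmetric]
      by (simp only: integral_mult_right_zero integral_normal_density_iexp[OF \<tau>])
    also have "\<dots> = ?N * ?E * (iexp (s * x) * iexp (r * (m2 + c * (x - m1) / a)))"
      by (simp only: ac_simps)
    also have "\<dots> = (iexp (r * (m2 - c * m1 / a)) * ?E) * (?N * iexp ((s + r * c / a) * x))"
      unfolding iexp_eq by (simp only: ac_simps)
    finally show ?thesis .
  qed
  have "(\<integral>z. ?F z \<partial>lborel) = (\<integral>x. (\<integral>y. ?F (x, y) \<partial>lborel) \<partial>lborel)"
    using lborel_pair.integral_fst'[of ?F] integrable_binormal_density_iexp[OF a disc]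
    by (simp add: lborel_prod)
  also have "\<dots> = (iexp (r * (m2 - c * m1 / a)) * complex_of_real (exp (- (r^2 * \<tau>^2) / 2))) *
      (iexp ((s + r * c / a) * m1) * complex_of_real (exp (- ((s + r * c / a)^2 * (sqrt a)^2) / 2)))"
    by (simp only: inner integral_mult_right_zero integral_normal_density_iexp[OF sqrt_a])
  also have "\<dots> = iexp (r * (m2 - c * m1 / a) + (s + r * c / a) * m1) *
      complex_of_real (exp (- (r^2 * \<tau>^2) / 2 + - ((s + r * c / a)^2 * (sqrt a)^2) / 2))"
    by (simp only: iexp_add exp_add of_real_mult ac_simps)
  also have "r * (m2 - c * m1 / a) + (s + r * c / a) * m1 = s * m1 + r * m2"
    using a by (simp add: field_simps)
  also have "- (r^2 * \<tau>^2) / 2 + - ((s + r * c / a)^2 * (sqrt a)^2) / 2 = - (a * s^2 + 2 * c * s * r + b * r^2) / 2"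
    using a unfolding \<tau>_sq by (simp add: field_simps power2_eq_square)
  finally show ?thesis .
qed

lemma gauss_density_pairwise_cov:
  fixes m :: "real^('d::finite + 'd)" and a b c :: "real^'d"
  assumes a: "\<And>i. a $ i > 0" and disc: "\<And>i. (c $ i)^2 < a $ i * b $ i"
  shows "gauss_density m (pairwise_cov a b c) w =
     (\<Prod>i\<in>UNIV. binormal_density (m $ Inl i) (m $ Inr i) (a $ i) (b $ i) (c $ i) (w $ Inl i, w $ Inr i))"
proof -
  define \<Delta> where "\<Delta> i = a $ i * b $ i - (c $ i)^2" for i
  define q where "q i = b $ i * (w $ Inl i - m $ Inl i)^2 - 2 * c $ i * (w $ Inl i - m $ Inl i) * (w $ Inr i - m $ Inr i)
      + a $ i * (w $ Inr i - m $ Inr i)^2" for i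
  have \<Delta>: "\<Delta> i > 0" for i
    using disc[of i] by (simp add: \<Delta>_def)
  have inv: "matrix_inv (pairwise_cov a b c) = pairwise_cov (\<chi> i. b $ i / \<Delta> i) (\<chi> i. a $ i / \<Delta> i) (\<chi> i. - c $ i / \<Delta> i)"
    using matrix_inv_pairwise_cov[OF disc] by (simp add: \<Delta>_def)
  have "- (1/2) * ((w - m) \<bullet> (matrix_inv (pairwise_cov a b c) *v (w - m))) = (\<Sum>i\<in>UNIV. - q i / (2 * \<Delta> i))"
    unfolding inv quadratic_form_pairwise_cov sum_distrib_left
    using \<Delta> by (intro sum.cong) (simp_all add: q_def field_simps less_imp_neq[symmetric])
  moreover have "sqrt ((2 * pi) ^ CARD('d + 'd) * det (pairwise_cov a b c)) = (\<Prod>i\<in>UNIV. 2 * pi * sqrt (\<Delta> i))"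
  proof -
    have "(2 * pi) ^ CARD('d + 'd) * det (pairwise_cov a b c) = (\<Prod>i\<in>UNIV. (2 * pi)^2 * \<Delta> i)"
      using disc by (simp add: \<Delta>_def det_pairwise_cov[OF a] less_imp_le prod.distrib prod_constant
          card_UNIV_sum mult_2[symmetric] power_mult)
    also have "\<dots> = (\<Prod>i\<in>UNIV. 2 * pi * sqrt (\<Delta> i))^2"
      using \<Delta> by (simp add: prod_power_distrib power_mult_distrib less_imp_le)
    finally show ?thesis
      using \<Delta> by (simp add: prod_nonneg less_imp_le)
  qed
  ultimately have "gauss_density m (pairwise_cov a b c) w = exp (\<Sum>i\<in>UNIV. - q i / (2 * \<Delta> i)) / (\<Prod>i\<in>UNIV. 2 * pi * sqrt (\<Delta> i))"
    by (simp only: gauss_density_def)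
  also have "\<dots> = (\<Prod>i\<in>UNIV. binormal_density (m $ Inl i) (m $ Inr i) (a $ i) (b $ i) (c $ i) (w $ Inl i, w $ Inr i))"
    by (simp add: exp_sum prod_dividef binormal_density_def q_def \<Delta>_def)
  finally show ?thesis .
qed

lemma
  fixes m t :: "real^('d::finite + 'd)" and a b c :: "real^'d"
  assumes a: "\<And>i. a $ i > 0" and disc: "\<And>i. (c $ i)^2 < a $ i * b $ i"
  shows integrable_gauss_density_pairwise_cov_iexp:
      "integrable lborel (\<lambda>w. complex_of_real (gauss_density m (pairwise_cov a b c) w) * iexp (t \<bullet> w))"
    and integral_gauss_density_pairwise_cov_iexp:
      "(\<integral>w. complex_of_real (gauss_density m (pairwise_cov a b c) w) * iexp (t \<bullet> w) \<partial>lborel) =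
         iexp (t \<bullet> m) * complex_of_real (exp (- (1/2) * (t \<bullet> (pairwise_cov a b c *v t))))"
proof -
  define H where "H i z = complex_of_real (binormal_density (m $ Inl i) (m $ Inr i) (a $ i) (b $ i) (c $ i) z) *
      iexp (t $ Inl i * fst z + t $ Inr i * snd z)" for i z
  have H_int: "integrable lborel (H i)" for i
    unfolding H_def by (rule integrable_binormal_density_iexp[OF a disc])
  have factor: "complex_of_real (gauss_density m (pairwise_cov a b c) w) * iexp (t \<bullet> w) =
      (\<Prod>i\<in>UNIV. H i (w $ Inl i, w $ Inr i))" for w
    unfolding gauss_density_pairwise_cov[OF a disc] inner_vec_Plus H_def
    by (simp only: of_real_prod iexp_sum[OF finite] prod.distrib fst_conv snd_conv)
  show "integrable lborel (\<lambda>w. complex_of_real (gauss_density m (pairwise_cov a b c) w) * iexp (t \<bullet> w))"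
    unfolding factor by (rule integrable_prod_pairs[OF H_int])
  have "(\<integral>w. complex_of_real (gauss_density m (pairwise_cov a b c) w) * iexp (t \<bullet> w) \<partial>lborel) =
      (\<Prod>i\<in>UNIV. iexp (t $ Inl i * m $ Inl i + t $ Inr i * m $ Inr i) * complex_of_real
        (exp (- (a $ i * (t $ Inl i)^2 + 2 * c $ i * t $ Inl i * t $ Inr i + b $ i * (t $ Inr i)^2) / 2)))"
    unfolding factor integral_prod_pairs[OF H_int] unfolding H_def
    by (simp only: integral_binormal_density_iexp[OF a disc])
  also have "\<dots> = iexp (\<Sum>i\<in>UNIV. t $ Inl i * m $ Inl i + t $ Inr i * m $ Inr i) * complex_of_real
      (exp (\<Sum>i\<in>UNIV. - (a $ i * (t $ Inl i)^2 + 2 * c $ i * t $ Inl i * t $ Inr i + b $ i * (t $ Inr i)^2) / 2))"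
    by (simp only: iexp_sum[OF finite] exp_sum[OF finite] of_real_prod prod.distrib)
  also have "\<dots> = iexp (t \<bullet> m) * complex_of_real (exp (- (1/2) * (t \<bullet> (pairwise_cov a b c *v t))))"
  proof -
    have "(\<Sum>i\<in>UNIV. - (a $ i * (t $ Inl i)^2 + 2 * c $ i * t $ Inl i * t $ Inr i + b $ i * (t $ Inr i)^2) / 2)
        = - (1/2) * (t \<bullet> (pairwise_cov a b c *v t))"
      unfolding quadratic_form_pairwise_cov sum_distrib_left by (rule sum.cong) (auto simp: field_simps)
    then show ?thesis
      by (simp only: inner_vec_Plus[of t m])
  qed
  finally show "(\<integral>w. complex_of_real (gauss_density m (pairwise_cov a b c) w) * iexp (t \<bullet> w) \<partial>lborel) =
      iexp (t \<bullet> m) * complex_of_real (exp (- (1/2) * (t \<bullet> (pairwise_cov a b c *v t))))" .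
qed

lemma
  fixes m t :: "real^('d::finite + 'd)" and a b c :: "real^'d"
  assumes a: "\<And>i. a $ i > 0" and disc: "\<And>i. (c $ i)^2 < a $ i * b $ i"
  shows integrable_gauss_density_pairwise_cov_cos:
      "integrable lborel (\<lambda>w. gauss_density m (pairwise_cov a b c) w * cos (t \<bullet> w))"
    and integral_gauss_density_pairwise_cov_cos:
      "(\<integral>w. gauss_density m (pairwise_cov a b c) w * cos (t \<bullet> w) \<partial>lborel) =
         exp (- (1/2) * (t \<bullet> (pairwise_cov a b c *v t))) * cos (t \<bullet> m)"
proof -
  have Re_eq: "Re (complex_of_real x * iexp \<theta>) = x * cos \<theta>" for x \<theta>
    by (simp add: Re_exp)
  note int = integrable_gauss_density_pairwise_cov_iexp[OF a disc, of m t]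
  show "integrable lborel (\<lambda>w. gauss_density m (pairwise_cov a b c) w * cos (t \<bullet> w))"
    using integrable_Re[OF int] by (simp only: Re_eq)
  have "(\<integral>w. gauss_density m (pairwise_cov a b c) w * cos (t \<bullet> w) \<partial>lborel) =
      (\<integral>w. Re (complex_of_real (gauss_density m (pairwise_cov a b c) w) * iexp (t \<bullet> w)) \<partial>lborel)"
    by (simp only: Re_eq)
  also have "\<dots> = Re (\<integral>w. complex_of_real (gauss_density m (pairwise_cov a b c) w) * iexp (t \<bullet> w) \<partial>lborel)"
    by (rule integral_Re[OF int])
  also have "\<dots> = exp (- (1/2) * (t \<bullet> (pairwise_cov a b c *v t))) * cos (t \<bullet> m)"
    unfolding integral_gauss_density_pairwise_cov_iexp[OF a disc] by (simp add: Re_exp mult.commute)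
  finally show "(\<integral>w. gauss_density m (pairwise_cov a b c) w * cos (t \<bullet> w) \<partial>lborel) =
      exp (- (1/2) * (t \<bullet> (pairwise_cov a b c *v t))) * cos (t \<bullet> m)" .
qed

lemma gauss_density_uminus: "gauss_density m C (- w) = gauss_density (- m) C w"
proof -
  have "- w - m = - (w - - m)"
    by simp
  moreover have "matrix_inv C *v (- (w - - m)) = - (matrix_inv C *v (w - - m))"
    by (rule linear_neg[OF matrix_vector_mul_linear])
  ultimately have "(- w - m) \<bullet> (matrix_inv C *v (- w - m)) = (w - - m) \<bullet> (matrix_inv C *v (w - - m))"
    by (simp only: inner_minus_left inner_minus_right minus_minus)
  then show ?thesis
    unfolding gauss_density_def by simp
qed

lemma
  fixes m t :: "real^('d::finite + 'd)" and a b c :: "real^'d"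
  assumes a: "\<And>i. a $ i > 0" and disc: "\<And>i. (c $ i)^2 < a $ i * b $ i"
  defines "g \<equiv> \<lambda>w. 1/2 * gauss_density m (pairwise_cov a b c) w + 1/2 * gauss_density m (pairwise_cov a b c) (- w)"
  shows integrable_sym_gauss_density_cos: "integrable lborel (\<lambda>w. g w * cos (t \<bullet> w))"
    and integral_sym_gauss_density_cos:
      "(\<integral>w. g w * cos (t \<bullet> w) \<partial>lborel) = exp (- (1/2) * (t \<bullet> (pairwise_cov a b c *v t))) * cos (t \<bullet> m)"
proof -
  have g_cos: "g w * cos (t \<bullet> w) = 1/2 * (gauss_density m (pairwise_cov a b c) w * cos (t \<bullet> w))
      + 1/2 * (gauss_density (- m) (pairwise_cov a b c) w * cos (t \<bullet> w))" for w
    by (simp add: g_def gauss_density_uminus algebra_simps)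
  note int = integrable_gauss_density_pairwise_cov_cos[OF a disc]
  show "integrable lborel (\<lambda>w. g w * cos (t \<bullet> w))"
    unfolding g_cos using int by simp
  show "(\<integral>w. g w * cos (t \<bullet> w) \<partial>lborel) = exp (- (1/2) * (t \<bullet> (pairwise_cov a b c *v t))) * cos (t \<bullet> m)"
    unfolding g_cos using int by (simp add: integral_gauss_density_pairwise_cov_cos[OF a disc])
qed

(* The normalising constant is sqrt 0 = 0 and x / 0 = 0. *)
lemma gauss_density_singular: "det C = 0 \<Longrightarrow> gauss_density m C w = 0"
  by (simp add: gauss_density_def)

lemma gauss_density_nonneg: "det C \<ge> 0 \<Longrightarrow> gauss_density m C w \<ge> 0"
  by (simp add: gauss_density_def)

section \<open>The NG-SM spectral density\<close>

definition corr_cov :: "real \<Rightarrow> real^'d \<Rightarrow> real^'d \<Rightarrow> real^'d" where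
  "corr_cov r u v = (\<chi> i. r * (sqrt (u $ i) * sqrt (v $ i)))"

lemma Sigc_eq_diagm: "Sigc rho s1 s2 q = diagm (corr_cov (rho q) (s1 q) (s2 q))"
  unfolding Sigc_def diagm_mult scaleR_diagm corr_cov_def by (simp add: vec_eq_iff)

lemma ngsm_cov_eq_pairwise_cov:
  "block (Sig1 s1 q) (transpose (Sigc rho s1 s2 q)) (Sigc rho s1 s2 q) (Sig2 s2 q) =
     pairwise_cov (s1 q) (s2 q) (corr_cov (rho q) (s1 q) (s2 q))"
  by (simp add: Sig1_def Sig2_def Sigc_eq_diagm pairwise_cov_def transpose_diagm)

lemma sq_top_bot_part:
  "sq mu1 mu2 s1 s2 rho q (top_part w) (bot_part w) =
     1/2 * gauss_density (stack (mu1 q) (mu2 q)) (pairwise_cov (s1 q) (s2 q) (corr_cov (rho q) (s1 q) (s2 q))) w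
   + 1/2 * gauss_density (stack (mu1 q) (mu2 q)) (pairwise_cov (s1 q) (s2 q) (corr_cov (rho q) (s1 q) (s2 q))) (- w)"
  by (simp add: sq_def Nq_def ngsm_cov_eq_pairwise_cov uminus_stack[symmetric])

lemma corr_cov_disc:
  assumes "u $ i > 0" "v $ i > 0"
  shows "u $ i * v $ i - (corr_cov r u v $ i)^2 = u $ i * v $ i * (1 - r^2)"
  using assms by (simp add: corr_cov_def power_mult_distrib algebra_simps)

lemma det_pairwise_cov_corr_cov:
  fixes u v :: "real^'d::finite"
  assumes u: "\<And>i. u $ i > 0" and v: "\<And>i. v $ i > 0" and r: "r^2 \<le> 1"
  shows "det (pairwise_cov u v (corr_cov r u v)) = (\<Prod>i\<in>UNIV. u $ i * v $ i * (1 - r^2))"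
proof -
  have "u $ i * v $ i * (1 - r^2) \<ge> 0" for i
    using u[of i] v[of i] r by simp
  then have "(corr_cov r u v $ i)^2 \<le> u $ i * v $ i" for i
    using corr_cov_disc[OF u v, of i r] by (metis diff_ge_0_iff_ge)
  then show ?thesis
    by (simp add: det_pairwise_cov[OF u] corr_cov_disc[OF u v])
qed

lemma sq_nonneg:
  assumes s1: "\<And>i. s1 q $ i > 0" and s2: "\<And>i. s2 q $ i > 0" and rho: "(rho q)^2 \<le> 1"
  shows "sq mu1 mu2 s1 s2 rho q (top_part w) (bot_part w) \<ge> 0"
  unfolding sq_top_bot_part using s1 s2 rho
  by (intro add_nonneg_nonneg mult_nonneg_nonneg gauss_density_nonneg)
    (simp_all add: det_pairwise_cov_corr_cov prod_nonneg less_imp_le)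

lemma sq_degenerate:
  assumes s1: "\<And>i. s1 q $ i > 0" and s2: "\<And>i. s2 q $ i > 0" and rho: "(rho q)^2 = 1"
  shows "sq mu1 mu2 s1 s2 rho q (top_part w) (bot_part w) = 0"
proof -
  have "det (pairwise_cov (s1 q) (s2 q) (corr_cov (rho q) (s1 q) (s2 q))) = 0"
    using rho by (simp add: det_pairwise_cov_corr_cov[OF s1 s2])
  then show ?thesis
    by (simp only: sq_top_bot_part gauss_density_singular mult_zero_right add_0)
qed

section \<open>Random features and the NG-SM kernel\<close>

definition feature_kernel :: "real^'d \<Rightarrow> real^'d \<Rightarrow> real^('d + 'd) \<Rightarrow> real" where
  "feature_kernel x1 x2 w =
     (cos (top_part w \<bullet> x1) + cos (bot_part w \<bullet> x1)) * (cos (top_part w \<bullet> x2) + cos (bot_part w \<bullet> x2))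
   + (sin (top_part w \<bullet> x1) + sin (bot_part w \<bullet> x1)) * (sin (top_part w \<bullet> x2) + sin (bot_part w \<bullet> x2))"

lemma feature_kernel_eq_cos:
  "feature_kernel x1 x2 w = cos (stack x1 (- x2) \<bullet> w) + cos (stack (- x2) x1 \<bullet> w)
     + cos (stack (x1 - x2) 0 \<bullet> w) + cos (stack 0 (x1 - x2) \<bullet> w)"
proof -
  have stack_w: "stack a b \<bullet> w = top_part w \<bullet> a + bot_part w \<bullet> b" for a b
    by (metis inner_commute inner_stack stack_top_bot_part)
  show ?thesis
    by (simp add: feature_kernel_def stack_w inner_diff_right cos_diff cos_add algebra_simps)
qed

lemma phi_inner_eq:
  fixes W :: "nat \<Rightarrow> real^('d::finite + 'd)"
  assumes "even L"
  shows "(\<Sum>k<L. phi L W x1 k * phi L W x2 k) = 1 / (2 * real L) * (\<Sum>l\<in>{1..L div 2}. feature_kernel x1 x2 (W l))"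
proof -
  obtain n where L: "L = n + n"
    using assms by (metis evenE mult_2)
  let ?f = "\<lambda>k. phi L W x1 k * phi L W x2 k"
  have "(\<Sum>k<L. ?f k) = (\<Sum>k<n. ?f k) + (\<Sum>k\<in>{n..<n + n}. ?f k)"
    unfolding L lessThan_atLeast0 by (simp add: sum.atLeastLessThan_concat)
  also have "(\<Sum>k\<in>{n..<n + n}. ?f k) = (\<Sum>k<n. ?f (k + n))"
    using sum.shift_bounds_nat_ivl[of ?f 0 n n] by (simp add: lessThan_atLeast0)
  also have "(\<Sum>k<n. ?f k) + (\<Sum>k<n. ?f (k + n)) = (\<Sum>k<n. 1 / (2 * real L) * feature_kernel x1 x2 (W (Suc k)))"
  proof -
    define c where "c = sqrt (1 / (2 * real L))"
    have c_sq: "c * c = 1 / (2 * real L)"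
      by (simp add: c_def)
    have cos_part: "phi L W x k = c * (cos (top_part (W (Suc k)) \<bullet> x) + cos (bot_part (W (Suc k)) \<bullet> x))"
      if "k < n" for k x
      using that by (simp add: phi_def c_def L)
    have sin_part: "phi L W x (k + n) = c * (sin (top_part (W (Suc k)) \<bullet> x) + sin (bot_part (W (Suc k)) \<bullet> x))"
      for k x
      by (simp add: phi_def c_def L)
    have "?f k + ?f (k + n) = c * c * feature_kernel x1 x2 (W (Suc k))" if "k < n" for k
      using that by (simp add: cos_part sin_part feature_kernel_def algebra_simps)
    then show ?thesis
      unfolding sum.distrib[symmetric] c_sq by simp
  qed
  also have "\<dots> = 1 / (2 * real L) * (\<Sum>l\<in>{1..L div 2}. feature_kernel x1 x2 (W l))"
    by (simp add: L sum_distrib_left sum.atLeast1_atMost_eq)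
  finally show ?thesis .
qed

definition ngsm_component :: "(nat \<Rightarrow> real^'d) \<Rightarrow> (nat \<Rightarrow> real^'d) \<Rightarrow> (nat \<Rightarrow> real^'d) \<Rightarrow> (nat \<Rightarrow> real^'d)
     \<Rightarrow> (nat \<Rightarrow> real) \<Rightarrow> nat \<Rightarrow> real^'d \<Rightarrow> real^'d \<Rightarrow> real" where
  "ngsm_component mu1 mu2 s1 s2 rho q x1 x2 =
     (let S1 = Sig1 s1 q; S2 = Sig2 s2 q; Sc = Sigc rho s1 s2 q in
        exp (- (1/2) * (x1 \<bullet> (S1 *v x1) - 2 * (x1 \<bullet> (Sc *v x2)) + x2 \<bullet> (S2 *v x2)))
          * cos (mu1 q \<bullet> x1 - mu2 q \<bullet> x2)
      + exp (- (1/2) * (x2 \<bullet> (S1 *v x2) - 2 * (x1 \<bullet> (Sc *v x2)) + x1 \<bullet> (S2 *v x1)))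
          * cos (mu1 q \<bullet> x2 - mu2 q \<bullet> x1)
      + exp (- (1/2) * ((x1 - x2) \<bullet> (S1 *v (x1 - x2)))) * cos (mu1 q \<bullet> (x1 - x2))
      + exp (- (1/2) * ((x1 - x2) \<bullet> (S2 *v (x1 - x2)))) * cos (mu2 q \<bullet> (x1 - x2)))"

lemma k_ngsm_eq_sum_ngsm_component:
  "k_ngsm Q alpha mu1 mu2 s1 s2 rho x1 x2 = 1/4 * (\<Sum>q = 1..Q. alpha q * ngsm_component mu1 mu2 s1 s2 rho q x1 x2)"
  unfolding k_ngsm_def ngsm_component_def ..

lemma ngsm_component_eq_char:
  fixes x1 x2 :: "real^'d::finite" and mu1 mu2 s1 s2 :: "nat \<Rightarrow> real^'d" and rho :: "nat \<Rightarrow> real" and q :: nat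
  defines "C \<equiv> pairwise_cov (s1 q) (s2 q) (corr_cov (rho q) (s1 q) (s2 q))"
    and "m \<equiv> stack (mu1 q) (mu2 q)"
  defines "E \<equiv> \<lambda>t. exp (- (1/2) * (t \<bullet> (C *v t))) * cos (t \<bullet> m)"
  shows "ngsm_component mu1 mu2 s1 s2 rho q x1 x2 =
    E (stack x1 (- x2)) + E (stack (- x2) x1) + E (stack (x1 - x2) 0) + E (stack 0 (x1 - x2))"
proof -
  note E_simps = E_def C_def m_def quadratic_form_pairwise_cov_stack Sig1_def Sig2_def Sigc_eq_diagm inner_stack
  have "E (stack x1 (- x2)) = exp (- (1/2) * (x1 \<bullet> (Sig1 s1 q *v x1) - 2 * (x1 \<bullet> (Sigc rho s1 s2 q *v x2))
      + x2 \<bullet> (Sig2 s2 q *v x2))) * cos (mu1 q \<bullet> x1 - mu2 q \<bullet> x2)"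
    by (simp add: E_simps diagm_mulv inner_commute)
  moreover have "E (stack (- x2) x1) = exp (- (1/2) * (x2 \<bullet> (Sig1 s1 q *v x2) - 2 * (x1 \<bullet> (Sigc rho s1 s2 q *v x2))
      + x1 \<bullet> (Sig2 s2 q *v x1))) * cos (mu1 q \<bullet> x2 - mu2 q \<bullet> x1)"
  proof -
    have "cos (- (x2 \<bullet> mu1 q) + x1 \<bullet> mu2 q) = cos (mu1 q \<bullet> x2 - mu2 q \<bullet> x1)"
      by (metis cos_minus minus_diff_eq inner_commute uminus_add_conv_diff)
    moreover have "x2 \<bullet> (c * x1) = x1 \<bullet> (c * x2)" for c :: "real^'d"
      by (simp add: inner_vec_def mult_ac)
    ultimately show ?thesis
      by (simp add: E_simps diagm_mulv inner_commute)
  qed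
  moreover have "E (stack (x1 - x2) 0) = exp (- (1/2) * ((x1 - x2) \<bullet> (Sig1 s1 q *v (x1 - x2)))) * cos (mu1 q \<bullet> (x1 - x2))"
    by (simp add: E_simps inner_commute)
  moreover have "E (stack 0 (x1 - x2)) = exp (- (1/2) * ((x1 - x2) \<bullet> (Sig2 s2 q *v (x1 - x2)))) * cos (mu2 q \<bullet> (x1 - x2))"
    by (simp add: E_simps inner_commute)
  ultimately show ?thesis
    unfolding ngsm_component_def Let_def by simp
qed

lemma
  fixes s1 s2 :: "nat \<Rightarrow> real^'d::finite"
  assumes s1: "\<And>i. s1 q $ i > 0" and s2: "\<And>i. s2 q $ i > 0" and rho: "(rho q)^2 < 1"
  shows integrable_sq_nondegenerate: "integrable lborel (\<lambda>w. sq mu1 mu2 s1 s2 rho q (top_part w) (bot_part w))"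
    and integral_sq_nondegenerate: "(\<integral>w. sq mu1 mu2 s1 s2 rho q (top_part w) (bot_part w) \<partial>lborel) = 1"
    and integrable_sq_feature_kernel_nondegenerate:
      "integrable lborel (\<lambda>w. sq mu1 mu2 s1 s2 rho q (top_part w) (bot_part w) * feature_kernel x1 x2 w)"
    and integral_sq_feature_kernel_nondegenerate:
      "(\<integral>w. sq mu1 mu2 s1 s2 rho q (top_part w) (bot_part w) * feature_kernel x1 x2 w \<partial>lborel) =
         ngsm_component mu1 mu2 s1 s2 rho q x1 x2"
proof -
  let ?m = "stack (mu1 q) (mu2 q)" and ?C = "pairwise_cov (s1 q) (s2 q) (corr_cov (rho q) (s1 q) (s2 q))"
  let ?g = "\<lambda>w. 1/2 * gauss_density ?m ?C w + 1/2 * gauss_density ?m ?C (- w)"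
  have disc: "(corr_cov (rho q) (s1 q) (s2 q) $ i)^2 < s1 q $ i * s2 q $ i" for i
  proof -
    have "s1 q $ i * s2 q $ i * (1 - (rho q)^2) > 0"
      using s1[of i] s2[of i] rho by simp
    then show ?thesis
      using corr_cov_disc[OF s1 s2, of i "rho q"] by (metis diff_gt_0_iff_gt)
  qed
  note int = integrable_sym_gauss_density_cos[OF s1 disc, of ?m]
    and integral = integral_sym_gauss_density_cos[OF s1 disc, of ?m]
  have sq_eq: "sq mu1 mu2 s1 s2 rho q (top_part w) (bot_part w) = ?g w" for w
    by (rule sq_top_bot_part)
  show "integrable lborel (\<lambda>w. sq mu1 mu2 s1 s2 rho q (top_part w) (bot_part w))"
    unfolding sq_eq using int[of 0] by simp
  show "(\<integral>w. sq mu1 mu2 s1 s2 rho q (top_part w) (bot_part w) \<partial>lborel) = 1"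
    unfolding sq_eq using integral[of 0] by simp
  have split: "?g w * feature_kernel x1 x2 w = ?g w * cos (stack x1 (- x2) \<bullet> w) + ?g w * cos (stack (- x2) x1 \<bullet> w)
      + ?g w * cos (stack (x1 - x2) 0 \<bullet> w) + ?g w * cos (stack 0 (x1 - x2) \<bullet> w)" for w
    unfolding feature_kernel_eq_cos by (simp only: distrib_left)
  show "integrable lborel (\<lambda>w. sq mu1 mu2 s1 s2 rho q (top_part w) (bot_part w) * feature_kernel x1 x2 w)"
    unfolding sq_eq split by (intro Bochner_Integration.integrable_add int)
  show "(\<integral>w. sq mu1 mu2 s1 s2 rho q (top_part w) (bot_part w) * feature_kernel x1 x2 w \<partial>lborel) =
      ngsm_component mu1 mu2 s1 s2 rho q x1 x2"
    unfolding sq_eq split ngsm_component_eq_char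
    by (simp only: Bochner_Integration.integral_add Bochner_Integration.integrable_add int integral)
qed

lemma
  fixes s1 s2 :: "nat \<Rightarrow> real^'d::finite"
  assumes s1: "\<And>i. s1 q $ i > 0" and s2: "\<And>i. s2 q $ i > 0" and rho: "(rho q)^2 \<le> 1"
  shows integrable_sq: "integrable lborel (\<lambda>w. sq mu1 mu2 s1 s2 rho q (top_part w) (bot_part w))"
    and integral_sq: "(\<integral>w. sq mu1 mu2 s1 s2 rho q (top_part w) (bot_part w) \<partial>lborel) =
      (if (rho q)^2 < 1 then 1 else 0)"
    and integrable_sq_feature_kernel:
      "integrable lborel (\<lambda>w. sq mu1 mu2 s1 s2 rho q (top_part w) (bot_part w) * feature_kernel x1 x2 w)"
    and integral_sq_feature_kernel:
      "(\<integral>w. sq mu1 mu2 s1 s2 rho q (top_part w) (bot_part w) * feature_kernel x1 x2 w \<partial>lborel) =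
         (if (rho q)^2 < 1 then ngsm_component mu1 mu2 s1 s2 rho q x1 x2 else 0)"
  using rho by (cases "(rho q)^2 < 1"; simp add: s1 s2 sq_degenerate integrable_sq_nondegenerate
      integral_sq_nondegenerate integrable_sq_feature_kernel_nondegenerate integral_sq_feature_kernel_nondegenerate)+

lemma sum_weights_subset:
  fixes alpha k :: "'a \<Rightarrow> real"
  assumes "finite A" "B \<subseteq> A" "\<And>q. q \<in> A \<Longrightarrow> alpha q \<ge> 0" "(\<Sum>q\<in>B. alpha q) = (\<Sum>q\<in>A. alpha q)"
  shows "(\<Sum>q\<in>B. alpha q * k q) = (\<Sum>q\<in>A. alpha q * k q)"
proof -
  have "(\<Sum>q\<in>A - B. alpha q) = 0"
    using assms by (simp add: sum_diff finite_subset)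
  then have "alpha q = 0" if "q \<in> A - B" for q
    using assms that by (subst (asm) sum_nonneg_eq_0_iff) auto
  then show ?thesis
    using assms by (simp add: sum.subset_diff[of B A])
qed

lemma
  fixes alpha :: "nat \<Rightarrow> real" and mu1 mu2 s1 s2 :: "nat \<Rightarrow> real^'d::finite"
  assumes s1: "\<And>q i. q \<in> {1..Q} \<Longrightarrow> s1 q $ i > 0" and s2: "\<And>q i. q \<in> {1..Q} \<Longrightarrow> s2 q $ i > 0"
    and rho: "\<And>q. q \<in> {1..Q} \<Longrightarrow> (rho q)^2 \<le> 1"
  defines "p \<equiv> \<lambda>w. p_ngsm Q alpha mu1 mu2 s1 s2 rho (top_part w) (bot_part w)"
    and "N \<equiv> {q \<in> {1..Q}. (rho q)^2 < 1}"
  shows integrable_p_ngsm: "integrable lborel p"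
    and integral_p_ngsm: "(\<integral>w. p w \<partial>lborel) = (\<Sum>q\<in>N. alpha q)"
    and integrable_p_ngsm_feature_kernel: "integrable lborel (\<lambda>w. p w * feature_kernel x1 x2 w)"
    and integral_p_ngsm_feature_kernel: "(\<integral>w. p w * feature_kernel x1 x2 w \<partial>lborel) =
      (\<Sum>q\<in>N. alpha q * ngsm_component mu1 mu2 s1 s2 rho q x1 x2)"
proof -
  let ?sq = "\<lambda>q w. sq mu1 mu2 s1 s2 rho q (top_part w) (bot_part w)"
  let ?k = "feature_kernel x1 x2"
  have p_eq: "p w = (\<Sum>q = 1..Q. alpha q * ?sq q w)" for w
    by (simp add: p_def p_ngsm_def)
  have p_k_eq: "p w * ?k w = (\<Sum>q = 1..Q. alpha q * (?sq q w * ?k w))" for w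
    by (simp add: p_eq sum_distrib_right mult.assoc)
  have int: "integrable lborel (?sq q)" "integrable lborel (\<lambda>w. ?sq q w * ?k w)"
    and integral: "(\<integral>w. ?sq q w \<partial>lborel) = (if (rho q)^2 < 1 then 1 else 0)"
      "(\<integral>w. ?sq q w * ?k w \<partial>lborel) = (if (rho q)^2 < 1 then ngsm_component mu1 mu2 s1 s2 rho q x1 x2 else 0)"
    if "q \<in> {1..Q}" for q
    by (rule integrable_sq integrable_sq_feature_kernel integral_sq integral_sq_feature_kernel;
        use that s1 s2 rho in auto)+
  show "integrable lborel p"
    unfolding p_eq[abs_def] using int by (intro Bochner_Integration.integrable_sum integrable_mult_right) auto
  show "integrable lborel (\<lambda>w. p w * ?k w)"
    unfolding p_k_eq using int by (intro Bochner_Integration.integrable_sum integrable_mult_right) auto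
  have "(\<integral>w. p w \<partial>lborel) = (\<Sum>q = 1..Q. alpha q * (if (rho q)^2 < 1 then 1 else 0))"
    unfolding p_eq using int integral by (simp add: Bochner_Integration.integral_sum)
  then show "(\<integral>w. p w \<partial>lborel) = (\<Sum>q\<in>N. alpha q)"
    unfolding N_def sum.inter_filter[OF finite_atLeastAtMost] by (simp add: if_distrib cong: if_cong)
  have "(\<integral>w. p w * ?k w \<partial>lborel) =
      (\<Sum>q = 1..Q. alpha q * (if (rho q)^2 < 1 then ngsm_component mu1 mu2 s1 s2 rho q x1 x2 else 0))"
    unfolding p_k_eq using int integral by (simp add: Bochner_Integration.integral_sum)
  then show "(\<integral>w. p w * ?k w \<partial>lborel) = (\<Sum>q\<in>N. alpha q * ngsm_component mu1 mu2 s1 s2 rho q x1 x2)"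
    unfolding N_def sum.inter_filter[OF finite_atLeastAtMost] by (simp add: if_distrib cong: if_cong)
qed

lemma p_ngsm_nonneg:
  assumes "\<And>q. q \<in> {1..Q} \<Longrightarrow> alpha q \<ge> 0"
    and "\<And>q i. q \<in> {1..Q} \<Longrightarrow> s1 q $ i > 0" "\<And>q i. q \<in> {1..Q} \<Longrightarrow> s2 q $ i > 0"
    and "\<And>q. q \<in> {1..Q} \<Longrightarrow> (rho q)^2 \<le> 1"
  shows "p_ngsm Q alpha mu1 mu2 s1 s2 rho (top_part w) (bot_part w) \<ge> 0"
  unfolding p_ngsm_def using assms by (intro sum_nonneg mult_nonneg_nonneg sq_nonneg) auto

lemma integral_p_ngsm_feature_kernel_eq_k_ngsm:
  fixes alpha :: "nat \<Rightarrow> real" and mu1 mu2 s1 s2 :: "nat \<Rightarrow> real^'d::finite"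
  assumes alpha: "\<And>q. q \<in> {1..Q} \<Longrightarrow> alpha q \<ge> 0" and alpha_sum: "(\<Sum>q = 1..Q. alpha q) = 1"
    and s1: "\<And>q i. q \<in> {1..Q} \<Longrightarrow> s1 q $ i > 0" and s2: "\<And>q i. q \<in> {1..Q} \<Longrightarrow> s2 q $ i > 0"
    and rho: "\<And>q. q \<in> {1..Q} \<Longrightarrow> (rho q)^2 \<le> 1"
    and mass: "(\<integral>w. p_ngsm Q alpha mu1 mu2 s1 s2 rho (top_part w) (bot_part w) \<partial>lborel) = 1"
  shows "(\<integral>w. p_ngsm Q alpha mu1 mu2 s1 s2 rho (top_part w) (bot_part w) * feature_kernel x1 x2 w \<partial>lborel) =
    4 * k_ngsm Q alpha mu1 mu2 s1 s2 rho x1 x2"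
proof -
  let ?N = "{q \<in> {1..Q}. (rho q)^2 < 1}"
  \<comment> \<open>Components with rho q = 1 or -1 have no mass, so total mass 1 forces their weights to vanish.\<close>
  have "(\<integral>w. p_ngsm Q alpha mu1 mu2 s1 s2 rho (top_part w) (bot_part w) \<partial>lborel) = (\<Sum>q\<in>?N. alpha q)"
    by (rule integral_p_ngsm) (use s1 s2 rho in auto)
  then have "(\<Sum>q\<in>?N. alpha q * ngsm_component mu1 mu2 s1 s2 rho q x1 x2) =
      (\<Sum>q = 1..Q. alpha q * ngsm_component mu1 mu2 s1 s2 rho q x1 x2)"
    using mass alpha alpha_sum by (intro sum_weights_subset) auto
  moreover have "(\<integral>w. p_ngsm Q alpha mu1 mu2 s1 s2 rho (top_part w) (bot_part w) * feature_kernel x1 x2 w \<partial>lborel) =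
      (\<Sum>q\<in>?N. alpha q * ngsm_component mu1 mu2 s1 s2 rho q x1 x2)"
    by (rule integral_p_ngsm_feature_kernel) (use s1 s2 rho in auto)
  ultimately show ?thesis
    by (simp add: k_ngsm_eq_sum_ngsm_component)
qed

lemma borel_measurable_feature_kernel: "feature_kernel x1 x2 \<in> borel_measurable lborel"
  unfolding feature_kernel_eq_cos[abs_def] measurable_lborel2
  by (intro borel_measurable_continuous_onI continuous_intros)

lemma (in prob_space)
  assumes "distributed M lborel X (\<lambda>x. ennreal (p x))" "\<And>x. p x \<ge> 0"
    and "g \<in> borel_measurable lborel" "integrable lborel (\<lambda>x. p x * g x)"
  shows integrable_distributed_lborel: "integrable M (\<lambda>\<omega>. g (X \<omega>))"
    and expectation_distributed_lborel: "expectation (\<lambda>\<omega>. g (X \<omega>)) = (\<integral>x. p x * g x \<partial>lborel)"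
  using distributed_integrable[OF assms(1,3)] distributed_integral[OF assms(1,3)] assms(2,4) by simp_all

theorem theorem2:
  fixes Q :: nat and alpha :: "nat \<Rightarrow> real"
    and mu1 mu2 s1 s2 :: "nat \<Rightarrow> real^'d" and rho :: "nat \<Rightarrow> real"
    and L :: nat and M :: "'a measure" and W :: "nat \<Rightarrow> 'a \<Rightarrow> real^('d+'d)"
    and x1 x2 :: "real^'d"
  assumes "Q \<ge> 1"
    and "\<And>q. q \<in> {1..Q} \<Longrightarrow> alpha q \<ge> 0"
    and "(\<Sum>q = 1..Q. alpha q) = 1"
    and "\<And>q i. q \<in> {1..Q} \<Longrightarrow> s1 q $ i > 0"
    and "\<And>q i. q \<in> {1..Q} \<Longrightarrow> s2 q $ i > 0"
    and "\<And>q. q \<in> {1..Q} \<Longrightarrow> -1 \<le> rho q \<and> rho q \<le> 1"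
    and "even L" and "L > 0"
    and "prob_space M"
    and "prob_space.indep_vars M (\<lambda>_. borel) W {1..L div 2}"
    and "\<And>l. l \<in> {1..L div 2} \<Longrightarrow>
           distributed M lborel (W l)
             (\<lambda>w. ennreal (p_ngsm Q alpha mu1 mu2 s1 s2 rho (top_part w) (bot_part w)))"
  shows "prob_space.expectation M (\<lambda>\<omega>. \<Sum>k<L. phi L (\<lambda>l. W l \<omega>) x1 k * phi L (\<lambda>l. W l \<omega>) x2 k)
           = k_ngsm Q alpha mu1 mu2 s1 s2 rho x1 x2"
proof -
  interpret prob_space M by fact
  let ?p = "\<lambda>w. p_ngsm Q alpha mu1 mu2 s1 s2 rho (top_part w) (bot_part w)"
  let ?k = "feature_kernel x1 x2"
  have rho: "(rho q)^2 \<le> 1" if "q \<in> {1..Q}" for q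
    using assms(6)[OF that] by (simp add: abs_square_le_1 abs_le_iff)
  have p_nonneg: "?p w \<ge> 0" for w
    by (rule p_ngsm_nonneg) (use assms(2,4,5) rho in auto)
  have p_k_int: "integrable lborel (\<lambda>w. ?p w * ?k w)"
    by (rule integrable_p_ngsm_feature_kernel) (use assms(4,5) rho in auto)
  have "1 \<in> {1..L div 2}"
    using assms(7,8) by (auto elim: evenE)
  then have "(\<integral>w. ?p w \<partial>lborel) = 1"
    using distributed_integral[OF assms(11), of 1 "\<lambda>_. 1"] p_nonneg by (simp add: prob_space)
  then have p_k: "(\<integral>w. ?p w * ?k w \<partial>lborel) = 4 * k_ngsm Q alpha mu1 mu2 s1 s2 rho x1 x2"
    by (intro integral_p_ngsm_feature_kernel_eq_k_ngsm) (use assms(2-5) rho in auto)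
  note feature = integrable_distributed_lborel expectation_distributed_lborel
  have "expectation (\<lambda>\<omega>. \<Sum>k<L. phi L (\<lambda>l. W l \<omega>) x1 k * phi L (\<lambda>l. W l \<omega>) x2 k) =
      1 / (2 * real L) * (\<Sum>l\<in>{1..L div 2}. expectation (\<lambda>\<omega>. ?k (W l \<omega>)))"
    using feature(1)[OF assms(11) p_nonneg borel_measurable_feature_kernel p_k_int]
    by (simp add: phi_inner_eq[OF assms(7)] Bochner_Integration.integral_sum)
  also have "\<dots> = 1 / (2 * real L) * (real (L div 2) * (4 * k_ngsm Q alpha mu1 mu2 s1 s2 rho x1 x2))"
    using feature(2)[OF assms(11) p_nonneg borel_measurable_feature_kernel p_k_int] p_k by simp
  also have "\<dots> = k_ngsm Q alpha mu1 mu2 s1 s2 rho x1 x2"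
    using assms(7,8) by (auto elim!: evenE)
  finally show ?thesis .
qed

end
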